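(* Let $w=w_1\cdots w_n$ be a word of length $n\ge 2$ such that each letter appears at most $k$ times in $w$, and such that there are exactly $s$ indices $i\in[n]$ with $w_i=w_{n-i+1}$. Then $f(w)\le \max\{n+2k-s,\,n\}+2$.
   Context: A word of length $n$ is a sequence $w=w_1w_2\cdots w_n$ of letters (symbols). Let $[n]=\{1,\dots,n\}$. An $n$-grid is a function $G:[n]^2\to\Sigma$, where $\Sigma$ is an arbitrary set of letters. The $i$th row of $G$ contains $w$ if $G(i,j)=w_j$ for all $1\le j\le n$, or $G(i,j)=w_{n-j+1}$ for all $1\le j\le n$. The $j$th column contains $w$ if $G(i,j)=w_i$ for all $i$, or $G(i,j)=w_{n-i+1}$ for all $i$. The main diagonal contains $w$ if $G(i,i)=w_i$ for all $i$ or $G(i,i)=w_{n-i+1}$ for all $i$; the anti-diagonal contains $w$ if $G(i,n-i+1)=w_i$ for all $i$ or $G(i,n-i+1)=w_{n-i+1}$ for all $i$. Let $f(w,G)$ be the number of the $2n+2$ lines ($n$ rows, $n$ columns, $2$ diagonals) of $G$ that contain $w$, and $f(w)=\max_G f(w,G)$ over all $n$-grids $G$. *)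

theory Defs
  imports Main
begin

(* A word w = w_1 ... w_n is a list; w_i is  w ! (i - 1).
   An n-grid is a function G :: nat => nat => 'a, only its values on [n]^2 matter. *)

definition letter :: "'a list \<Rightarrow> nat \<Rightarrow> 'a" where
  "letter w i = w ! (i - 1)"

definition row_contains :: "'a list \<Rightarrow> (nat \<Rightarrow> nat \<Rightarrow> 'a) \<Rightarrow> nat \<Rightarrow> bool" where
  "row_contains w G i \<longleftrightarrow> (let n = length w in
     (\<forall>j\<in>{1..n}. G i j = letter w j) \<or> (\<forall>j\<in>{1..n}. G i j = letter w (n - j + 1)))"

definition col_contains :: "'a list \<Rightarrow> (nat \<Rightarrow> nat \<Rightarrow> 'a) \<Rightarrow> nat \<Rightarrow> bool" where
  "col_contains w G j \<longleftrightarrow> (let n = length w in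
     (\<forall>i\<in>{1..n}. G i j = letter w i) \<or> (\<forall>i\<in>{1..n}. G i j = letter w (n - i + 1)))"

definition diag_contains :: "'a list \<Rightarrow> (nat \<Rightarrow> nat \<Rightarrow> 'a) \<Rightarrow> bool" where
  "diag_contains w G \<longleftrightarrow> (let n = length w in
     (\<forall>i\<in>{1..n}. G i i = letter w i) \<or> (\<forall>i\<in>{1..n}. G i i = letter w (n - i + 1)))"

definition antidiag_contains :: "'a list \<Rightarrow> (nat \<Rightarrow> nat \<Rightarrow> 'a) \<Rightarrow> bool" where
  "antidiag_contains w G \<longleftrightarrow> (let n = length w in
     (\<forall>i\<in>{1..n}. G i (n - i + 1) = letter w i) \<or>
     (\<forall>i\<in>{1..n}. G i (n - i + 1) = letter w (n - i + 1)))"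

definition fG :: "'a list \<Rightarrow> (nat \<Rightarrow> nat \<Rightarrow> 'a) \<Rightarrow> nat" where
  "fG w G = card {i\<in>{1..length w}. row_contains w G i}
          + card {j\<in>{1..length w}. col_contains w G j}
          + (if diag_contains w G then 1 else 0)
          + (if antidiag_contains w G then 1 else 0)"

(* f(w) = max over all n-grids (the set is bounded by 2n+2, hence finite) *)
definition f :: "'a list \<Rightarrow> nat" where
  "f w = Max (range (fG w))"

end

theory Submission
  imports Defs
begin

(* Suppose row i contains w. A column j containing w meets row i in an entry that is
   w_j or w_{n+1-j} (read along the row) and also w_i or w_{n+1-i} (read along the
   column). So the columns containing w lie among the positions of at most two letters:
   there are at most 2k of them, and at most k if w_i = w_{n+1-i}. The same holds with
   rows and columns exchanged. If no row containing w has a symmetric index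
   (w_i = w_{n+1-i}), there are at most n - s such rows and at most 2k such columns;
   likewise with rows and columns exchanged; otherwise both counts are at most k.
   The diagonals add at most 2. *)

lemma card_mirror_positions:
  "card {j\<in>{1..n::nat}. P (n - j + 1)} = card {j\<in>{1..n}. P j}"
  by (rule bij_betw_same_card[of "\<lambda>j. n - j + 1"])
    (rule bij_betw_byWitness[where f' = "\<lambda>j. n - j + 1"], auto)

lemma card_positions_in_pair_le:
  assumes "\<forall>c. card {i\<in>{1..n}. letter w i = c} \<le> k"
  shows "card {i\<in>{1..n}. letter w i \<in> {a, b}} \<le> (if a = b then k else 2 * k)"
proof -
  have "{i\<in>{1..n}. letter w i \<in> {a, b}}
      = {i\<in>{1..n}. letter w i = a} \<union> {i\<in>{1..n}. letter w i = b}"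
    by auto
  then have "card {i\<in>{1..n}. letter w i \<in> {a, b}}
      \<le> card {i\<in>{1..n}. letter w i = a} + card {i\<in>{1..n}. letter w i = b}"
    by (simp add: card_Un_le)
  then show ?thesis
    using assms[rule_format, of a] assms[rule_format, of b] by auto
qed

lemma card_cols_containing_le:
  assumes len: "length w = n"
    and occ: "\<forall>c. card {i\<in>{1..n}. letter w i = c} \<le> k"
    and i: "i \<in> {1..n}" and row: "row_contains w G i"
  shows "card {j\<in>{1..n}. col_contains w G j}
           \<le> (if letter w i = letter w (n - i + 1) then k else 2 * k)"
proof -
  let ?ab = "{letter w i, letter w (n - i + 1)}"
  have col_entry: "G i j \<in> ?ab" if "j \<in> {1..n}" "col_contains w G j" for j
    using that i len unfolding col_contains_def Let_def by auto
  have "card {j\<in>{1..n}. col_contains w G j} \<le> card {j\<in>{1..n}. letter w j \<in> ?ab}"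
  proof -
    from row len consider
        "\<forall>j\<in>{1..n}. G i j = letter w j"
      | "\<forall>j\<in>{1..n}. G i j = letter w (n - j + 1)"
      unfolding row_contains_def Let_def by auto
    then show ?thesis
    proof cases
      case 1
      then have "{j\<in>{1..n}. col_contains w G j} \<subseteq> {j\<in>{1..n}. letter w j \<in> ?ab}"
        using col_entry by (metis (no_types, lifting) mem_Collect_eq subsetI)
      then show ?thesis
        by (intro card_mono) simp_all
    next
      case 2
      then have "{j\<in>{1..n}. col_contains w G j} \<subseteq> {j\<in>{1..n}. letter w (n - j + 1) \<in> ?ab}"
        using col_entry by (metis (no_types, lifting) mem_Collect_eq subsetI)
      then have "card {j\<in>{1..n}. col_contains w G j}
          \<le> card {j\<in>{1..n}. letter w (n - j + 1) \<in> ?ab}"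
        by (intro card_mono) simp_all
      then show ?thesis
        by (simp only: card_mirror_positions[where P = "\<lambda>j. letter w j \<in> ?ab"])
    qed
  qed
  also have "\<dots> \<le> (if letter w i = letter w (n - i + 1) then k else 2 * k)"
    by (rule card_positions_in_pair_le[OF occ])
  finally show ?thesis .
qed

(* Not simp rules: the pattern (\<lambda>i j. ?G j i) matches every grid, so they would loop. *)
lemma row_contains_transpose: "row_contains w (\<lambda>i j. G j i) i = col_contains w G i"
  unfolding row_contains_def col_contains_def by simp

lemma col_contains_transpose: "col_contains w (\<lambda>i j. G j i) j = row_contains w G j"
  unfolding row_contains_def col_contains_def by simp

lemma card_rows_containing_le:
  assumes "length w = n"
    and "\<forall>c. card {i\<in>{1..n}. letter w i = c} \<le> k"
    and "j \<in> {1..n}" and "col_contains w G j"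
  shows "card {i\<in>{1..n}. row_contains w G i}
           \<le> (if letter w j = letter w (n - j + 1) then k else 2 * k)"
proof -
  have "row_contains w (\<lambda>i j. G j i) j"
    using assms(4) by (simp only: row_contains_transpose[of w G])
  from card_cols_containing_le[OF assms(1-3) this] show ?thesis
    by (simp only: col_contains_transpose[of w G])
qed

lemma card_add_card_le_if_cross_bounded:
  fixes R C S :: "nat set"
  assumes "R \<subseteq> {1..n}" "C \<subseteq> {1..n}" "S \<subseteq> {1..n}"
    and C_le: "\<And>i. i \<in> R \<Longrightarrow> card C \<le> (if i \<in> S then k else 2 * k)"
    and R_le: "\<And>j. j \<in> C \<Longrightarrow> card R \<le> (if j \<in> S then k else 2 * k)"
  shows "card R + card C \<le> max (n + 2 * k - card S) n"
proof -
  have RC_le: "card R \<le> n" "card C \<le> n" "card S \<le> n"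
    using assms(1-3) by (auto dest: card_mono[rotated])
  have off_S: "card X \<le> n - card S" if "X \<subseteq> {1..n}" "X \<inter> S = {}" for X
  proof -
    have "X \<subseteq> {1..n} - S" using that by auto
    then have "card X \<le> card ({1..n} - S)" by (intro card_mono) auto
    then show ?thesis using assms(3) by (simp add: card_Diff_subset finite_subset)
  qed
  consider "R = {} \<or> C = {}" | "R \<noteq> {}" "C \<noteq> {}" "R \<inter> S = {}"
    | "R \<noteq> {}" "C \<noteq> {}" "C \<inter> S = {}" | "R \<inter> S \<noteq> {}" "C \<inter> S \<noteq> {}"
    by blast
  then show ?thesis
  proof cases
    case 1
    then show ?thesis using RC_le by auto
  next
    case 2
    then obtain i where "i \<in> R" by blast
    then have "card C \<le> 2 * k" using C_le[of i] by (auto split: if_splits)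
    then show ?thesis using 2 off_S[OF assms(1)] RC_le by auto
  next
    case 3
    then obtain j where "j \<in> C" by blast
    then have "card R \<le> 2 * k" using R_le[of j] by (auto split: if_splits)
    then show ?thesis using 3 off_S[OF assms(2)] RC_le by auto
  next
    case 4
    then have "card C \<le> k" "card R \<le> k" using C_le R_le by fastforce+
    then show ?thesis using RC_le by auto
  qed
qed

lemma fG_le_card_rows_add_card_cols:
  "fG w G \<le> card {i\<in>{1..length w}. row_contains w G i}
              + card {j\<in>{1..length w}. col_contains w G j} + 2"
  unfolding fG_def by simp

lemma card_Collect_atLeastAtMost_le: "card {i\<in>{1..n::nat}. P i} \<le> n"
proof -
  have "card {i\<in>{1..n}. P i} \<le> card {1..n}"
    by (rule card_mono) auto
  then show ?thesis by simp
qed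

lemma fG_le: "fG w G \<le> 2 * length w + 2"
  using fG_le_card_rows_add_card_cols[of w G]
    card_Collect_atLeastAtMost_le[of "length w" "row_contains w G"]
    card_Collect_atLeastAtMost_le[of "length w" "col_contains w G"]
  by linarith

lemma f_attained: "\<exists>G. f w = fG w G"
proof -
  have "range (fG w) \<subseteq> {..2 * length w + 2}"
    using fG_le by blast
  then have "finite (range (fG w))"
    by (rule finite_subset) simp
  then have "f w \<in> range (fG w)"
    unfolding f_def by (rule Max_in) simp
  then show ?thesis by auto
qed

theorem lemma13:
  fixes w :: "'a list" and n k s :: nat
  assumes "length w = n" and "n \<ge> 2"
    and "\<forall>a. card {i\<in>{1..n}. letter w i = a} \<le> k"
    and "card {i\<in>{1..n}. letter w i = letter w (n - i + 1)} = s"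
  shows "int (f w) \<le> max (int n + 2 * int k - int s) (int n) + 2"
proof -
  obtain G where f: "f w = fG w G"
    using f_attained by blast
  let ?R = "{i\<in>{1..n}. row_contains w G i}" and ?C = "{j\<in>{1..n}. col_contains w G j}"
    and ?S = "{i\<in>{1..n}. letter w i = letter w (n - i + 1)}"
  have "card ?R + card ?C \<le> max (n + 2 * k - card ?S) n"
  proof (rule card_add_card_le_if_cross_bounded)
    show "?R \<subseteq> {1..n}" "?C \<subseteq> {1..n}" "?S \<subseteq> {1..n}" by auto
    show "card ?C \<le> (if i \<in> ?S then k else 2 * k)" if "i \<in> ?R" for i
      using card_cols_containing_le[OF assms(1,3), of i G] that by auto
    show "card ?R \<le> (if j \<in> ?S then k else 2 * k)" if "j \<in> ?C" for j
      using card_rows_containing_le[OF assms(1,3), of j G] that by auto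
  qed
  moreover have "f w \<le> card ?R + card ?C + 2"
    using f fG_le_card_rows_add_card_cols[of w G] assms(1) by simp
  moreover have "s \<le> n"
    using assms(4) card_Collect_atLeastAtMost_le[of n] by metis
  ultimately show ?thesis
    using assms(4) by linarith
qed

end
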